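(* Let $0\le\lambda<\gamma\le\delta$. If $\mathfrak{f}_1,\mathfrak{f}_2\in\mathcal{R}_H^0(\gamma,\delta,\lambda)$, then $\mathfrak{f}_1\ast\mathfrak{f}_2\in\mathcal{R}_H^0(\gamma,\delta,\lambda)$.
   Context: Let $\mathcal{U}=\{z\in\mathbb{C}:|z|<1\}$. $\mathcal{H}^0$ denotes the class of complex-valued harmonic functions $\mathfrak{f}=\mathfrak{s}+\overline{\mathfrak{t}}$ on $\mathcal{U}$, where $\mathfrak{s}(z)=z+\sum_{m\ge2}a_mz^m$ and $\mathfrak{t}(z)=\sum_{m\ge2}b_mz^m$ are analytic in $\mathcal{U}$. For real $0\le\lambda<\gamma\le\delta$, $\mathcal{R}_H^0(\gamma,\delta,\lambda)$ is the class of $\mathfrak{f}=\mathfrak{s}+\overline{\mathfrak{t}}\in\mathcal{H}^0$ such that for all $z\in\mathcal{U}$, $\mathrm{Re}\left[\gamma\mathfrak{s}'(z)+\delta z\mathfrak{s}''(z)+\frac{\delta-\gamma}{2}z^2\mathfrak{s}'''(z)-\lambda\right]>\left|\gamma\mathfrak{t}'(z)+\delta z\mathfrak{t}''(z)+\frac{\delta-\gamma}{2}z^2\mathfrak{t}'''(z)\right|$. For analytic $g(z)=\sum c_mz^m$, $h(z)=\sum d_mz^m$, the convolution is $(g\ast h)(z)=\sum c_md_mz^m$; for $\mathfrak{f}_i=\mathfrak{s}_i+\overline{\mathfrak{t}_i}$, $i=1,2$, the convolution is $\mathfrak{f}_1\ast\mathfrak{f}_2=\mathfrak{s}_1\ast\mathfrak{s}_2+\overline{\mathfrak{t}_1\ast\mathfrak{t}_2}$.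 *)

theory Defs
  imports "HOL-Complex_Analysis.Complex_Analysis"
begin

text \<open>A harmonic function f = s + conj t on the unit disc is represented by the
pair (s, t) of its analytic parts.\<close>

type_synonym harm = "(complex \<Rightarrow> complex) \<times> (complex \<Rightarrow> complex)"

definition H0 :: "harm set" where
  "H0 = {(s, t). s holomorphic_on ball 0 1 \<and> t holomorphic_on ball 0 1 \<and>
                 s 0 = 0 \<and> deriv s 0 = 1 \<and> t 0 = 0 \<and> deriv t 0 = 0}"

definition Lop :: "real \<Rightarrow> real \<Rightarrow> (complex \<Rightarrow> complex) \<Rightarrow> complex \<Rightarrow> complex" where
  "Lop \<gamma> \<delta> g z = of_real \<gamma> * deriv g z + of_real \<delta> * z * (deriv ^^ 2) g z
      + of_real ((\<delta> - \<gamma>) / 2) * z ^ 2 * (deriv ^^ 3) g z"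

definition RH0 :: "real \<Rightarrow> real \<Rightarrow> real \<Rightarrow> harm set" where
  "RH0 \<gamma> \<delta> lam = {(s, t) \<in> H0. \<forall>z \<in> ball 0 1.
      Re (Lop \<gamma> \<delta> s z - of_real lam) > cmod (Lop \<gamma> \<delta> t z)}"

definition tcoef :: "(complex \<Rightarrow> complex) \<Rightarrow> nat \<Rightarrow> complex" where
  "tcoef g n = (deriv ^^ n) g 0 / of_nat (fact n)"

definition aconv :: "(complex \<Rightarrow> complex) \<Rightarrow> (complex \<Rightarrow> complex) \<Rightarrow> complex \<Rightarrow> complex" where
  "aconv g h z = (\<Sum>n. tcoef g n * tcoef h n * z ^ n)"

definition hconv :: "harm \<Rightarrow> harm \<Rightarrow> harm" where
  "hconv f1 f2 = (aconv (fst f1) (fst f2), aconv (snd f1) (snd f2))"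

end

theory Submission
  imports Defs
begin

text \<open>In Taylor coefficients \<open>L\<close> is diagonal: the \<open>n\<close>-th coefficient of \<open>L g\<close> is \<open>A\<^sub>n a\<^sub>n\<^sub>+\<^sub>1\<close>
  with \<open>A\<^sub>n = \<gamma> (n+1)\<^sup>2 (\<beta> n + 1)\<close>, \<open>\<beta> = (\<delta> - \<gamma>)/(2\<gamma>)\<close>.  Membership of \<open>(s, t)\<close> in the class
  means that for every unimodular \<open>\<sigma>\<close> the series \<open>(L s + \<sigma> L t - \<lambda>)/(\<gamma> - \<lambda>)\<close> is normalised
  with non-negative real part.  By polarization, \<open>L\<close> of the convolution, rotated by \<open>\<epsilon>\<close>, is
  \<open>\<lambda> + (\<gamma> - \<lambda>)/2\<close> times the sum of two Hadamard products \<open>F * G * k\<close> of such series with the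
  kernel \<open>k\<^sub>n = (\<gamma> - \<lambda>)/A\<^sub>n\<close>.  The kernel is a convex combination of \<open>1\<close> and the Hadamard
  product of \<open>1/(n+1)\<close>, \<open>1/(n+1)\<close>, \<open>1/(\<beta> n + 1)\<close>, whose real parts are at least \<open>2/3\<close>, \<open>2/3\<close>, \<open>1/2\<close>.
  Repeated use of the convolution lemma \<open>Re p \<ge> 0, Re q \<ge> \<alpha> \<Longrightarrow> Re (p * q) \<ge> 2\<alpha> - 1\<close>, proved by
  integrating over circles, gives \<open>Re (F * G * k) \<ge> 1/9 > 0\<close>.\<close>

section \<open>Power series on the unit disc\<close>

definition disc_summable :: "(nat \<Rightarrow> complex) \<Rightarrow> bool" where
  "disc_summable c \<longleftrightarrow> (\<forall>z. norm z < 1 \<longrightarrow> summable (\<lambda>n. c n * z ^ n))"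

definition pseries :: "(nat \<Rightarrow> complex) \<Rightarrow> complex \<Rightarrow> complex" where
  "pseries c z = (\<Sum>n. c n * z ^ n)"

lemma pseries_sums: "disc_summable c \<Longrightarrow> norm z < 1 \<Longrightarrow> (\<lambda>n. c n * z ^ n) sums pseries c z"
  unfolding disc_summable_def pseries_def by (auto intro: summable_sums)

lemma disc_summable_sums:
  assumes "\<And>z. norm z < 1 \<Longrightarrow> (\<lambda>n. c n * z ^ n) sums S z"
  shows "disc_summable c" and "norm z < 1 \<Longrightarrow> pseries c z = S z"
  using assms by (auto simp: disc_summable_def pseries_def sums_iff)

lemma conv_radius_ge_1:
  assumes "disc_summable c" shows "fps_conv_radius (Abs_fps c) \<ge> 1"
  unfolding fps_conv_radius_def
proof (rule conv_radius_geI_ex')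
  fix r :: real assume "0 < r" "ereal r < 1"
  then show "summable (\<lambda>n. fps_nth (Abs_fps c) n * of_real r ^ n)"
    using assms unfolding disc_summable_def by auto
qed

lemma pseries_eq_eval_fps: "pseries c = eval_fps (Abs_fps c)"
  by (auto simp: pseries_def eval_fps_def)

lemma norm_less_conv_radius:
  assumes "disc_summable c" "norm z < 1" shows "ereal (norm z) < fps_conv_radius (Abs_fps c)"
proof -
  have "ereal (norm z) < 1" using assms(2) by simp
  then show ?thesis using conv_radius_ge_1[OF assms(1)] by (rule less_le_trans)
qed

lemma holomorphic_pseries:
  assumes "disc_summable c" shows "pseries c holomorphic_on ball 0 1"
proof -
  have "ball (0::complex) 1 \<subseteq> eball 0 (fps_conv_radius (Abs_fps c))"
    using norm_less_conv_radius[OF assms] by (auto simp: eball_def)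
  then show ?thesis unfolding pseries_eq_eval_fps by (rule holomorphic_on_eval_fps)
qed

lemma continuous_on_pseries: "disc_summable c \<Longrightarrow> continuous_on (ball 0 1) (pseries c)"
  using holomorphic_pseries holomorphic_on_imp_continuous_on by blast

lemma tcoef_pseries:
  assumes "disc_summable c" shows "tcoef (pseries c) n = c n"
proof -
  have "fps_conv_radius (Abs_fps c) > 0"
    using norm_less_conv_radius[OF assms, of 0] by (simp add: zero_ereal_def)
  from fps_nth_fps_expansion[OF eval_fps_has_fps_expansion[OF this]]
  show ?thesis by (simp add: tcoef_def pseries_eq_eval_fps)
qed

lemma summable_norm_pseries:
  assumes "disc_summable c" "norm z < 1" shows "summable (\<lambda>n. norm (c n * z ^ n))"
  using norm_summable_fps[OF norm_less_conv_radius[OF assms]] by simp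

lemma tcoef_sums:
  assumes "g holomorphic_on ball 0 1" "norm z < 1"
  shows "(\<lambda>n. tcoef g n * z ^ n) sums g z"
  using holomorphic_power_series[OF assms(1), of z] assms(2) by (simp add: tcoef_def)

lemma disc_summable_tcoef: "g holomorphic_on ball 0 1 \<Longrightarrow> disc_summable (tcoef g)"
  using disc_summable_sums(1)[OF tcoef_sums] by auto

lemma disc_summable_bounded:
  assumes "\<And>n. norm (c n) \<le> B" shows "disc_summable c"
  unfolding disc_summable_def
proof (intro allI impI)
  fix z :: complex assume "norm z < 1"
  then have "summable (\<lambda>n. B * norm z ^ n)" by (intro summable_mult summable_geometric) auto
  then show "summable (\<lambda>n. c n * z ^ n)"
    by (rule summable_comparison_test[rotated])
       (auto simp: norm_mult norm_power intro!: mult_right_mono assms)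
qed

text \<open>Write \<open>z = (z / r) * r\<close> with \<open>norm z < r < 1\<close>: the first factor gives absolute convergence,
  the second bounded terms.\<close>
lemma disc_summable_hadamard:
  assumes c: "disc_summable c" and d: "disc_summable d"
  shows "disc_summable (\<lambda>n. c n * d n)"
  unfolding disc_summable_def
proof (intro allI impI)
  fix z :: complex assume z: "norm z < 1"
  define r where "r = (1 + norm z) / 2"
  have r: "norm z < r" "r < 1" "0 < r" using z by (auto simp: r_def add_pos_nonneg)
  have abs_summable: "summable (\<lambda>n. norm (c n * (z / of_real r) ^ n))"
    using r by (intro summable_norm_pseries c) (simp add: norm_divide)
  obtain B where B: "\<And>n. norm (d n * of_real r ^ n) \<le> B"
  proof -
    have "summable (\<lambda>n. d n * of_real r ^ n)" using d r unfolding disc_summable_def by simp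
    then have "Bseq (\<lambda>n. d n * of_real r ^ n)" by (rule summable_imp_Bseq)
    then show ?thesis using that unfolding Bseq_def by blast
  qed
  have "summable (\<lambda>n. norm (c n * (z / of_real r) ^ n) * B)"
    using abs_summable by (rule summable_mult2)
  then have "summable (\<lambda>n. norm (c n * d n * z ^ n))"
  proof (rule summable_comparison_test[rotated], intro exI allI impI)
    fix n
    have "c n * d n * z ^ n = (c n * (z / of_real r) ^ n) * (d n * of_real r ^ n)"
      using r by (simp add: power_divide field_simps)
    then have "norm (c n * d n * z ^ n) = norm (c n * (z / of_real r) ^ n) * norm (d n * of_real r ^ n)"
      by (simp only: norm_mult)
    then show "norm (norm (c n * d n * z ^ n)) \<le> norm (c n * (z / of_real r) ^ n) * B"
      using B[of n] by (simp add: mult_left_mono)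
  qed
  then show "summable (\<lambda>n. c n * d n * z ^ n)" by (rule summable_norm_cancel)
qed

lemma sums_affine:
  fixes f :: "nat \<Rightarrow> 'a :: real_normed_algebra"
  assumes "f sums s"
  shows "(\<lambda>n. x * f n + (if n = 0 then y else 0)) sums (x * s + y)"
  using sums_add[OF sums_mult[OF assms, where c=x] sums_single[of 0 "\<lambda>_. y"]] by simp

lemma pseries_affine_sums:
  assumes "disc_summable c" "norm z < 1"
  shows "(\<lambda>n. (x * c n + (if n = 0 then y else 0)) * z ^ n) sums (x * pseries c z + y)"
proof -
  have "(\<lambda>n. x * (c n * z ^ n) + (if n = 0 then y else 0)) sums (x * pseries c z + y)"
    by (rule sums_affine[OF pseries_sums[OF assms]])
  moreover have "(\<lambda>n. (x * c n + (if n = 0 then y else 0)) * z ^ n) =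
      (\<lambda>n. x * (c n * z ^ n) + (if n = 0 then y else 0))"
    by (auto simp: fun_eq_iff algebra_simps)
  ultimately show ?thesis by simp
qed

lemma disc_summable_affine: "disc_summable c \<Longrightarrow> disc_summable (\<lambda>n. x * c n + (if n = 0 then y else 0))"
  and pseries_affine: "disc_summable c \<Longrightarrow> norm z < 1 \<Longrightarrow>
    pseries (\<lambda>n. x * c n + (if n = 0 then y else 0)) z = x * pseries c z + y"
  using disc_summable_sums[OF pseries_affine_sums] by auto

lemma disc_summable_cmult: "disc_summable c \<Longrightarrow> disc_summable (\<lambda>n. x * c n)"
  using disc_summable_affine[of c x 0] by simp

lemma pseries_cmult: "disc_summable c \<Longrightarrow> norm z < 1 \<Longrightarrow> pseries (\<lambda>n. x * c n) z = x * pseries c z"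
  using pseries_affine[of c z x 0] by simp

lemma pseries_add_sums:
  assumes "disc_summable c" "disc_summable d" "norm z < 1"
  shows "(\<lambda>n. (c n + d n) * z ^ n) sums (pseries c z + pseries d z)"
  using sums_add[OF pseries_sums[OF assms(1,3)] pseries_sums[OF assms(2,3)]] by (simp add: algebra_simps)

lemma disc_summable_add: "disc_summable c \<Longrightarrow> disc_summable d \<Longrightarrow> disc_summable (\<lambda>n. c n + d n)"
  and pseries_add: "disc_summable c \<Longrightarrow> disc_summable d \<Longrightarrow> norm z < 1 \<Longrightarrow>
    pseries (\<lambda>n. c n + d n) z = pseries c z + pseries d z"
  using disc_summable_sums[OF pseries_add_sums] by auto

section \<open>Integrals over circles\<close>

lemma continuous_on_pseries_comp:
  assumes "disc_summable c" "continuous_on S h" "\<And>t. t \<in> S \<Longrightarrow> norm (h t) < 1"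
  shows "continuous_on S (\<lambda>t. pseries c (h t))"
  by (rule continuous_on_compose2[OF continuous_on_pseries[OF assms(1)] assms(2)]) (use assms(3) in auto)

lemma pseries_circle: "pseries c (w * cis \<theta>) = (\<Sum>n. (c n * w ^ n) * cis (of_nat n * \<theta>))"
proof -
  have "(w * cis \<theta>) ^ n = w ^ n * cis (of_nat n * \<theta>)" for n
    by (simp only: power_mult_distrib Complex.DeMoivre)
  then show ?thesis unfolding pseries_def by (simp add: mult_ac)
qed

lemma integral_cis_int:
  fixes j :: int
  shows "integral {0..2*pi} (\<lambda>t. cis (of_int j * t)) = (if j = 0 then 2*pi else 0)"
proof (cases "j = 0")
  case True then show ?thesis by (simp add: scaleR_conv_of_real)
next
  case False
  define F where "F = (\<lambda>t. cis (of_int j * t) / (\<i> * of_int j))"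
  have "(F has_vector_derivative cis (of_int j * t)) (at t within {0..2*pi})" for t
  proof -
    have "((\<lambda>t. cis (of_int j * t)) has_derivative (\<lambda>h. (of_int j * h) *\<^sub>R (\<i> * cis (of_int j * t))))
        (at t within {0..2*pi})"
      by (intro has_derivative_cis derivative_intros)
    then have "((\<lambda>t. cis (of_int j * t)) has_vector_derivative (of_int j *\<^sub>R (\<i> * cis (of_int j * t))))
        (at t within {0..2*pi})"
      by (simp add: has_vector_derivative_def scaleR_scaleR mult.commute)
    from has_vector_derivative_divide[OF this, of "\<i> * of_int j"] False show ?thesis
      by (simp add: F_def scaleR_conv_of_real field_simps)
  qed
  then have "((\<lambda>t. cis (of_int j * t)) has_integral (F (2*pi) - F 0)) {0..2*pi}"
    by (intro fundamental_theorem_of_calculus) auto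
  moreover have "F (2*pi) = F 0"
    using cis_multiple_2pi[of "of_int j"] by (simp add: F_def mult_ac)
  ultimately show ?thesis using False by (simp add: integral_unique)
qed

lemma sums_integral_mult_suminf:
  fixes g :: "real \<Rightarrow> complex" and \<phi> :: "nat \<Rightarrow> real \<Rightarrow> complex" and c :: "nat \<Rightarrow> complex"
  assumes g: "continuous_on {a..b} g" and \<phi>: "\<And>n. continuous_on {a..b} (\<phi> n)"
    and \<phi>_le: "\<And>n t. t \<in> {a..b} \<Longrightarrow> norm (\<phi> n t) \<le> 1" and c: "summable (\<lambda>n. norm (c n))"
  shows "(\<lambda>n. c n * integral {a..b} (\<lambda>t. g t * \<phi> n t)) sums integral {a..b} (\<lambda>t. g t * (\<Sum>n. c n * \<phi> n t))"
    and "(\<lambda>t. g t * (\<Sum>n. c n * \<phi> n t)) integrable_on {a..b}"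
proof -
  have "compact (g ` {a..b})" by (intro compact_continuous_image g) auto
  then have "bounded (g ` {a..b})" by (rule compact_imp_bounded)
  then obtain B where "\<forall>x\<in>g ` {a..b}. norm x \<le> B" unfolding bounded_iff by blast
  then have B: "\<And>t. t \<in> {a..b} \<Longrightarrow> norm (g t) \<le> B" by blast
  define f where "f = (\<lambda>i t. g t * (c i * \<phi> i t))"
  have f_le: "norm (f i t) \<le> B * norm (c i)" if "t \<in> {a..b}" for i t
  proof -
    have "norm (f i t) = norm (g t) * (norm (c i) * norm (\<phi> i t))" by (simp add: f_def norm_mult)
    also have "\<dots> \<le> B * (norm (c i) * 1)"
      using B[OF that] \<phi>_le[OF that, of i] order_trans[OF norm_ge_zero B[OF that]]
      by (intro mult_mono mult_left_mono) auto
    finally show ?thesis by simp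
  qed
  have unif: "uniform_limit {a..b} (\<lambda>n t. \<Sum>i<n. f i t) (\<lambda>t. \<Sum>i. f i t) sequentially"
    by (rule Weierstrass_m_test[OF f_le]) (auto intro: summable_mult c)
  have suminf_f: "(\<Sum>i. f i t) = g t * (\<Sum>n. c n * \<phi> n t)" if "t \<in> {a..b}" for t
  proof -
    have "summable (\<lambda>n. norm (c n * \<phi> n t))"
      by (rule summable_comparison_test[OF _ c]) (auto simp: norm_mult intro!: mult_left_le \<phi>_le that)
    then have "summable (\<lambda>n. c n * \<phi> n t)" by (rule summable_norm_cancel)
    then show ?thesis unfolding f_def by (rule suminf_mult)
  qed
  have cont: "continuous_on {a..b} (\<lambda>t. \<Sum>i<n. f i t)" for n
    unfolding f_def by (intro continuous_intros g \<phi>)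
  obtain I J where I: "\<And>n. ((\<lambda>t. \<Sum>i<n. f i t) has_integral I n) {a..b}"
     and J: "((\<lambda>t. \<Sum>i. f i t) has_integral J) {a..b}" and lim: "I \<longlonglongrightarrow> J"
    by (rule uniform_limit_integral[OF unif cont]) auto
  have int_i: "((f i) has_integral (c i * integral {a..b} (\<lambda>t. g t * \<phi> i t))) {a..b}" for i
  proof -
    have "(\<lambda>t. g t * \<phi> i t) integrable_on {a..b}" by (intro integrable_continuous_interval continuous_intros g \<phi>)
    then have "((\<lambda>t. c i * (g t * \<phi> i t)) has_integral (c i * integral {a..b} (\<lambda>t. g t * \<phi> i t))) {a..b}"
      by (intro has_integral_mult_right integrable_integral)
    then show ?thesis by (simp add: f_def mult_ac)
  qed
  have "I n = (\<Sum>i<n. c i * integral {a..b} (\<lambda>t. g t * \<phi> i t))" for n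
    by (rule has_integral_unique[OF I has_integral_sum]) (auto intro: int_i)
  then have "I = (\<lambda>n. \<Sum>i<n. c i * integral {a..b} (\<lambda>t. g t * \<phi> i t))" by (rule ext)
  with lim have "(\<lambda>n. c n * integral {a..b} (\<lambda>t. g t * \<phi> n t)) sums J" by (simp add: sums_def)
  moreover have J': "((\<lambda>t. g t * (\<Sum>n. c n * \<phi> n t)) has_integral J) {a..b}"
    using J by (rule has_integral_eq[rotated]) (simp add: suminf_f)
  ultimately show "(\<lambda>n. c n * integral {a..b} (\<lambda>t. g t * \<phi> n t)) sums integral {a..b} (\<lambda>t. g t * (\<Sum>n. c n * \<phi> n t))"
    by (simp add: integral_unique)
  show "(\<lambda>t. g t * (\<Sum>n. c n * \<phi> n t)) integrable_on {a..b}" using J' by blast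
qed


lemma integral_cis_orthogonal:
  "integral {0..2*pi} (\<lambda>t. cis (- (of_nat k * t)) * cis (of_nat n * t)) = (if n = k then 2*pi else 0)"
proof -
  have "(\<lambda>t. cis (- (of_nat k * t)) * cis (of_nat n * t)) = (\<lambda>t. cis (of_int (int n - int k) * t))"
    by (auto simp: cis_mult fun_eq_iff algebra_simps)
  then show ?thesis using integral_cis_int[of "int n - int k"] by simp
qed

lemma integral_cis_conj_orthogonal:
  "integral {0..2*pi} (\<lambda>t. cis (- (of_nat k * t)) * cis (- (of_nat n * t)))
    = (if n = 0 \<and> k = 0 then complex_of_real (2*pi) else 0)"
proof -
  have "cis (- (of_nat k * t)) * cis (- (of_nat n * t)) = cis (of_int (- int n - int k) * t)" for t :: real
    unfolding cis_mult by (rule arg_cong[where f=cis]) (simp add: algebra_simps)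
  then show ?thesis using integral_cis_int[of "- int n - int k"] by simp
qed

lemma sums_mult_if_zero: "(\<lambda>n. (c :: nat \<Rightarrow> complex) n * (if n = 0 then y else 0)) sums (c 0 * y)"
proof -
  have "(\<lambda>n. if n = 0 then c n * y else 0) sums (c 0 * y)" by (rule sums_single[of 0 "\<lambda>n. c n * y", simplified])
  moreover have "(\<lambda>n. c n * (if n = 0 then y else 0)) = (\<lambda>n. if n = 0 then c n * y else 0)" by (auto simp: fun_eq_iff)
  ultimately show ?thesis by simp
qed

lemma integral_cis_mult_series:
  fixes c :: "nat \<Rightarrow> complex"
  assumes "summable (\<lambda>n. norm (c n))"
  shows "integral {0..2*pi} (\<lambda>t. cis (- (of_nat k * t)) * (\<Sum>n. c n * cis (of_nat n * t))) = 2 * pi * c k"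
proof -
  have "(\<lambda>n. c n * integral {0..2*pi} (\<lambda>t. cis (- (of_nat k * t)) * cis (of_nat n * t)))
      sums integral {0..2*pi} (\<lambda>t. cis (- (of_nat k * t)) * (\<Sum>n. c n * cis (of_nat n * t)))"
    by (rule sums_integral_mult_suminf(1)) (use assms in \<open>auto intro!: continuous_intros\<close>)
  moreover have "(\<lambda>n. c n * integral {0..2*pi} (\<lambda>t. cis (- (of_nat k * t)) * cis (of_nat n * t)))
      sums (c k * (2 * pi))"
    unfolding integral_cis_orthogonal using sums_single[of k "\<lambda>n. c n * (2 * pi)"]
    by (simp add: if_distrib cong: if_cong)
  ultimately show ?thesis by (simp add: sums_iff mult_ac)
qed

lemma integral_cis_mult_conj_series:
  fixes c :: "nat \<Rightarrow> complex"
  assumes "summable (\<lambda>n. norm (c n))"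
  shows "integral {0..2*pi} (\<lambda>t. cis (- (of_nat k * t)) * (\<Sum>n. c n * cis (- (of_nat n * t))))
    = (if k = 0 then 2 * pi * c 0 else 0)"
proof -
  have "(\<lambda>n. c n * integral {0..2*pi} (\<lambda>t. cis (- (of_nat k * t)) * cis (- (of_nat n * t))))
      sums integral {0..2*pi} (\<lambda>t. cis (- (of_nat k * t)) * (\<Sum>n. c n * cis (- (of_nat n * t))))"
    by (rule sums_integral_mult_suminf(1)) (use assms in \<open>auto intro!: continuous_intros\<close>)
  moreover have "(\<lambda>n. c n * integral {0..2*pi} (\<lambda>t. cis (- (of_nat k * t)) * cis (- (of_nat n * t))))
      sums (if k = 0 then 2 * pi * c 0 else 0)"
  proof (cases "k = 0")
    case True
    then show ?thesis unfolding integral_cis_conj_orthogonal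
      using sums_mult_if_zero[of c "2 * pi"] by (simp add: mult_ac)
  next
    case False
    then show ?thesis unfolding integral_cis_conj_orthogonal by simp
  qed
  ultimately show ?thesis by (simp add: sums_iff)
qed

lemma integral_pseries_circle:
  fixes f :: "nat \<Rightarrow> complex"
  assumes f: "disc_summable f" and w: "norm w < 1"
  shows "integral {0..2*pi} (\<lambda>t. pseries f (w * cis (- t))) = 2 * pi * f 0"
proof -
  have "summable (\<lambda>n. norm (f n * w ^ n))" by (rule summable_norm_pseries[OF f w])
  from integral_cis_mult_conj_series[OF this, of 0]
  show ?thesis by (simp add: pseries_circle)
qed

lemma integral_Re_pseries_mult_cis:
  fixes m :: "nat \<Rightarrow> complex" and \<sigma> :: real
  assumes m: "disc_summable m" and \<sigma>: "\<bar>\<sigma>\<bar> < 1"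
  shows "integral {0..2*pi} (\<lambda>t. (pseries m (of_real \<sigma> * cis t) + cnj (pseries m (of_real \<sigma> * cis t)))
            * cis (- (of_nat k * t)))
    = 2 * pi * (m k * of_real \<sigma> ^ k) + (if k = 0 then 2 * pi * cnj (m 0) else 0)"
proof -
  define M where "M = (\<lambda>t. pseries m (of_real \<sigma> * cis t))"
  have n\<sigma>: "norm (complex_of_real \<sigma>) < 1" using \<sigma> by simp
  have cont_M: "continuous_on {0..2*pi} M" unfolding M_def
    by (rule continuous_on_pseries_comp[OF m]) (use \<sigma> in \<open>auto intro!: continuous_intros simp: norm_mult\<close>)
  define cm where "cm = (\<lambda>n. m n * of_real \<sigma> ^ n)"
  define cm' where "cm' = (\<lambda>n. cnj (m n) * of_real \<sigma> ^ n)"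
  have scm: "summable (\<lambda>n. norm (cm n))" unfolding cm_def by (rule summable_norm_pseries[OF m n\<sigma>])
  have scm': "summable (\<lambda>n. norm (cm' n))" using scm by (simp add: cm_def cm'_def norm_mult)
  have sM: "M t = (\<Sum>n. cm n * cis (of_nat n * t))" for t
    using pseries_circle[of m "of_real \<sigma>" t] by (simp add: M_def cm_def)
  have sM': "cnj (M t) = (\<Sum>n. cm' n * cis (- (of_nat n * t)))" for t
  proof -
    have "(\<lambda>n. cm n * cis (of_nat n * t)) sums M t"
      unfolding sM by (rule summable_sums, rule summable_norm_cancel) (use scm in \<open>simp add: norm_mult\<close>)
    then have "(\<lambda>n. cnj (cm n * cis (of_nat n * t))) sums cnj (M t)" by (simp only: sums_cnj)
    then show ?thesis by (simp add: sums_iff cm_def cm'_def cis_cnj)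
  qed
  have "integral {0..2*pi} (\<lambda>t. (M t + cnj (M t)) * cis (- (of_nat k * t))) =
        integral {0..2*pi} (\<lambda>t. cis (- (of_nat k * t)) * M t + cis (- (of_nat k * t)) * cnj (M t))"
    by (simp add: algebra_simps)
  also have "\<dots> = integral {0..2*pi} (\<lambda>t. cis (- (of_nat k * t)) * M t)
                  + integral {0..2*pi} (\<lambda>t. cis (- (of_nat k * t)) * cnj (M t))"
    by (rule integral_add; rule integrable_continuous_interval) (use cont_M in \<open>auto intro!: continuous_intros\<close>)
  also have "\<dots> = 2 * pi * cm k + (if k = 0 then 2 * pi * cm' 0 else 0)"
    by (simp only: sM') (simp only: sM integral_cis_mult_series[OF scm] integral_cis_mult_conj_series[OF scm'])
  finally show ?thesis by (simp add: M_def cm_def cm'_def)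
qed

text \<open>Expanding both factors in Fourier series, only the diagonal terms survive the integration;
  the conjugate half of \<open>2 Re m\<close> contributes only through the constant term.\<close>
lemma integral_Re_pseries_mult_pseries:
  fixes f m :: "nat \<Rightarrow> complex" and \<sigma> :: real
  assumes f: "disc_summable f" and m: "disc_summable m" and \<sigma>: "\<bar>\<sigma>\<bar> < 1" and w: "norm w < 1"
  shows "integral {0..2*pi} (\<lambda>t. (pseries m (of_real \<sigma> * cis t) + cnj (pseries m (of_real \<sigma> * cis t)))
            * pseries f (w * cis (- t)))
    = 2 * pi * pseries (\<lambda>n. f n * m n) (of_real \<sigma> * w) + 2 * pi * (f 0 * cnj (m 0))"
proof -
  define W where "W = (\<lambda>t. pseries m (of_real \<sigma> * cis t) + cnj (pseries m (of_real \<sigma> * cis t)))"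
  have cont_W: "continuous_on {0..2*pi} W" unfolding W_def
    by (intro continuous_intros continuous_on_pseries_comp[OF m])
       (use \<sigma> in \<open>auto intro!: continuous_intros simp: norm_mult\<close>)
  define cf where "cf = (\<lambda>n. f n * w ^ n)"
  have scf: "summable (\<lambda>n. norm (cf n))" unfolding cf_def by (rule summable_norm_pseries[OF f w])
  have sF: "pseries f (w * cis (- t)) = (\<Sum>n. cf n * cis (- (of_nat n * t)))" for t
    using pseries_circle[of f w "- t"] by (simp add: cf_def)
  have "(\<lambda>k. cf k * integral {0..2*pi} (\<lambda>t. W t * cis (- (of_nat k * t))))
      sums integral {0..2*pi} (\<lambda>t. W t * (\<Sum>k. cf k * cis (- (of_nat k * t))))"
    by (rule sums_integral_mult_suminf(1)) (use scf cont_W in \<open>auto intro!: continuous_intros\<close>)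
  then have termwise: "(\<lambda>k. cf k * integral {0..2*pi} (\<lambda>t. W t * cis (- (of_nat k * t))))
      sums integral {0..2*pi} (\<lambda>t. W t * pseries f (w * cis (- t)))"
    unfolding sF .
  have "norm (of_real \<sigma> * w) < 1"
  proof -
    have "\<bar>\<sigma>\<bar> * norm w \<le> 1 * norm w" using \<sigma> by (intro mult_right_mono) auto
    then show ?thesis using w by (simp add: norm_mult)
  qed
  from pseries_sums[OF disc_summable_hadamard[OF f m] this]
  have "(\<lambda>k. 2 * pi * (f k * m k * (of_real \<sigma> * w) ^ k)) sums (2 * pi * pseries (\<lambda>n. f n * m n) (of_real \<sigma> * w))"
    by (rule sums_mult)
  then have "(\<lambda>k. 2 * pi * (f k * m k * (of_real \<sigma> * w) ^ k) + cf k * (if k = 0 then 2 * pi * cnj (m 0) else 0))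
      sums (2 * pi * pseries (\<lambda>n. f n * m n) (of_real \<sigma> * w) + cf 0 * (2 * pi * cnj (m 0)))"
    by (rule sums_add[OF _ sums_mult_if_zero])
  moreover have "(\<lambda>k. 2 * pi * (f k * m k * (of_real \<sigma> * w) ^ k) + cf k * (if k = 0 then 2 * pi * cnj (m 0) else 0))
      = (\<lambda>k. cf k * integral {0..2*pi} (\<lambda>t. W t * cis (- (of_nat k * t))))"
    unfolding W_def integral_Re_pseries_mult_cis[OF m \<sigma>]
    by (auto simp: fun_eq_iff cf_def power_mult_distrib algebra_simps)
  ultimately show ?thesis using termwise by (simp add: W_def cf_def sums_iff)
qed

section \<open>The Caratheodory class\<close>

definition caratheodory :: "real \<Rightarrow> (nat \<Rightarrow> complex) \<Rightarrow> bool" where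
  "caratheodory \<alpha> c \<longleftrightarrow> disc_summable c \<and> c 0 = 1 \<and> (\<forall>z. norm z < 1 \<longrightarrow> \<alpha> \<le> Re (pseries c z))"

lemma caratheodory_mono: "caratheodory \<alpha> c \<Longrightarrow> \<alpha>' \<le> \<alpha> \<Longrightarrow> caratheodory \<alpha>' c"
  unfolding caratheodory_def by force

lemma caratheodory_affine:
  assumes c: "caratheodory \<alpha> c" and x: "0 \<le> x"
  shows "caratheodory (x * \<alpha> + (1 - x)) (\<lambda>n. of_real x * c n + (if n = 0 then of_real (1 - x) else 0))"
  unfolding caratheodory_def
proof (intro conjI allI impI)
  have sc: "disc_summable c" and c0: "c 0 = 1" and Re_c: "\<And>z. norm z < 1 \<Longrightarrow> \<alpha> \<le> Re (pseries c z)"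
    using c by (auto simp: caratheodory_def)
  show "disc_summable (\<lambda>n. of_real x * c n + (if n = 0 then of_real (1 - x) else 0))"
    by (rule disc_summable_affine[OF sc])
  show "of_real x * c 0 + (if 0 = (0::nat) then of_real (1 - x) else 0) = 1" using c0 by simp
  fix z :: complex assume z: "norm z < 1"
  have "Re (pseries (\<lambda>n. of_real x * c n + (if n = 0 then of_real (1 - x) else 0)) z)
      = x * Re (pseries c z) + (1 - x)"
    using pseries_affine[OF sc z] by simp
  then show "x * \<alpha> + (1 - x) \<le> Re (pseries (\<lambda>n. of_real x * c n + (if n = 0 then of_real (1 - x) else 0)) z)"
    using Re_c[OF z] x by (simp add: mult_left_mono)
qed

lemma integral_Re_pseries_shift_mult_pseries:
  fixes f m :: "nat \<Rightarrow> complex" and \<sigma> \<alpha> :: real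
  assumes f: "disc_summable f" and m: "disc_summable m" and \<sigma>: "\<bar>\<sigma>\<bar> < 1" and w: "norm w < 1"
  shows "integral {0..2*pi} (\<lambda>t. (pseries m (of_real \<sigma> * cis t) + cnj (pseries m (of_real \<sigma> * cis t))
            - of_real (2 * \<alpha>)) * pseries f (w * cis (- t)))
    = 2 * pi * (pseries (\<lambda>n. f n * m n) (of_real \<sigma> * w) + f 0 * cnj (m 0) - of_real (2 * \<alpha>) * f 0)"
proof -
  define F where "F = (\<lambda>t. pseries f (w * cis (- t)))"
  define M where "M = (\<lambda>t. pseries m (of_real \<sigma> * cis t))"
  have cont_F: "continuous_on {0..2*pi} F" unfolding F_def
    by (rule continuous_on_pseries_comp[OF f]) (use w in \<open>auto intro!: continuous_intros simp: norm_mult\<close>)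
  have cont_M: "continuous_on {0..2*pi} M" unfolding M_def
    by (rule continuous_on_pseries_comp[OF m]) (use \<sigma> in \<open>auto intro!: continuous_intros simp: norm_mult\<close>)
  define D where "D = (\<lambda>t. (M t + cnj (M t) - of_real (2 * \<alpha>)) * F t)"
  have int_D: "D integrable_on {0..2*pi}" and int_F: "F integrable_on {0..2*pi}"
    unfolding D_def by (intro integrable_continuous_interval continuous_intros cont_M cont_F)+
  have "integral {0..2*pi} D
      = integral {0..2*pi} (\<lambda>t. (M t + cnj (M t)) * F t) - of_real (2 * \<alpha>) * integral {0..2*pi} F"
  proof -
    have "integral {0..2*pi} (\<lambda>t. (M t + cnj (M t)) * F t)
        = integral {0..2*pi} (\<lambda>t. D t + of_real (2 * \<alpha>) * F t)"
      by (simp add: D_def algebra_simps)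
    also have "\<dots> = integral {0..2*pi} D + of_real (2 * \<alpha>) * integral {0..2*pi} F"
      using int_D int_F by (simp add: integral_add integrable_on_mult_right)
    finally show ?thesis by simp
  qed
  also have "\<dots> = 2 * pi * (pseries (\<lambda>n. f n * m n) (of_real \<sigma> * w) + f 0 * cnj (m 0) - of_real (2 * \<alpha>) * f 0)"
    unfolding M_def F_def integral_Re_pseries_mult_pseries[OF f m \<sigma> w] integral_pseries_circle[OF f w]
    by (simp add: algebra_simps)
  finally show ?thesis by (simp only: D_def M_def F_def)
qed

text \<open>With \<open>z = \<sigma> w\<close>, \<open>Re (f * m)(z) - (2\<alpha> - 1)\<close> is the mean over \<open>t\<close> of
  \<open>Re f(w e\<^sup>-\<^sup>i\<^sup>t) \<cdot> (2 Re m(\<sigma> e\<^sup>i\<^sup>t) - 2\<alpha>)\<close>, a product of non-negative functions.\<close>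
lemma caratheodory_hadamard:
  assumes f: "caratheodory 0 f" and m: "caratheodory \<alpha> m"
  shows "caratheodory (2 * \<alpha> - 1) (\<lambda>n. f n * m n)"
proof -
  have sf: "disc_summable f" and f0: "f 0 = 1" and Re_f: "\<And>w. norm w < 1 \<Longrightarrow> 0 \<le> Re (pseries f w)"
    using f by (auto simp: caratheodory_def)
  have sm: "disc_summable m" and m0: "m 0 = 1" and Re_m: "\<And>w. norm w < 1 \<Longrightarrow> \<alpha> \<le> Re (pseries m w)"
    using m by (auto simp: caratheodory_def)
  have "2 * \<alpha> - 1 \<le> Re (pseries (\<lambda>n. f n * m n) z)" if z: "norm z < 1" for z
  proof -
    define \<sigma> where "\<sigma> = (1 + norm z) / 2"
    have \<sigma>: "0 < \<sigma>" "\<sigma> < 1" "norm z < \<sigma>" using z unfolding \<sigma>_def by (simp_all add: add_pos_nonneg field_simps)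
    then have abs_\<sigma>: "\<bar>\<sigma>\<bar> < 1" by simp
    define w where "w = z / of_real \<sigma>"
    have w: "norm w < 1" using \<sigma> by (simp add: w_def norm_divide field_simps)
    have zw: "z = of_real \<sigma> * w" using \<sigma> by (simp add: w_def)
    define D where "D = (\<lambda>t. (pseries m (of_real \<sigma> * cis t) + cnj (pseries m (of_real \<sigma> * cis t))
        - of_real (2 * \<alpha>)) * pseries f (w * cis (- t)))"
    have int_D: "D integrable_on {0..2*pi}" unfolding D_def
      by (intro integrable_continuous_interval continuous_intros continuous_on_pseries_comp[OF sm]
          continuous_on_pseries_comp[OF sf])
         (use \<sigma> w in \<open>auto intro!: continuous_intros simp: norm_mult\<close>)
    have "0 \<le> integral {0..2*pi} (\<lambda>t. Re (D t))"
    proof (rule integral_nonneg)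
      show "(\<lambda>t. Re (D t)) integrable_on {0..2*pi}"
        using has_integral_Re[OF integrable_integral[OF int_D]] by blast
    next
      fix t :: real
      have "\<alpha> \<le> Re (pseries m (of_real \<sigma> * cis t))" using Re_m \<sigma> by (simp add: norm_mult)
      moreover have "0 \<le> Re (pseries f (w * cis (- t)))" using Re_f w by (simp add: norm_mult)
      ultimately show "0 \<le> Re (D t)" by (simp add: D_def complex_add_cnj)
    qed
    also have "\<dots> = Re (integral {0..2*pi} D)"
      using has_integral_Re[OF integrable_integral[OF int_D]] by (simp add: integral_unique)
    also have "\<dots> = 2 * pi * (Re (pseries (\<lambda>n. f n * m n) z) + 1 - 2 * \<alpha>)"
      unfolding D_def integral_Re_pseries_shift_mult_pseries[OF sf sm abs_\<sigma> w] by (simp add: zw f0 m0)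
    finally show ?thesis using pi_gt_zero by (auto simp: zero_le_mult_iff)
  qed
  then show ?thesis unfolding caratheodory_def using disc_summable_hadamard[OF sf sm] f0 m0 by simp
qed

lemma caratheodory_hadamard_shifted:
  assumes p: "caratheodory a p" and a: "a < 1" and q: "caratheodory b q"
  shows "caratheodory (a + (1 - a) * (2 * b - 1)) (\<lambda>n. p n * q n)"
proof -
  have "p 0 = 1" "q 0 = 1" using p q by (simp_all add: caratheodory_def)
  define x where "x = 1 / (1 - a)"
  have x: "0 \<le> x" "(1 - complex_of_real a) * complex_of_real x = 1" "x * a + (1 - x) = 0"
    using a by (simp_all add: x_def field_simps flip: of_real_mult)
  have "caratheodory (x * a + (1 - x)) (\<lambda>n. of_real x * p n + (if n = 0 then of_real (1 - x) else 0))"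
    by (rule caratheodory_affine[OF p x(1)])
  then have "caratheodory 0 (\<lambda>n. of_real x * p n + (if n = 0 then of_real (1 - x) else 0))"
    unfolding x(3) .
  from caratheodory_hadamard[OF this q]
  have "caratheodory ((1 - a) * (2 * b - 1) + (1 - (1 - a)))
      (\<lambda>n. of_real (1 - a) * ((of_real x * p n + (if n = 0 then of_real (1 - x) else 0)) * q n)
          + (if n = 0 then of_real (1 - (1 - a)) else 0))"
    by (rule caratheodory_affine) (use a in simp)
  moreover have "(\<lambda>n. of_real (1 - a) * ((of_real x * p n + (if n = 0 then of_real (1 - x) else 0)) * q n)
          + (if n = 0 then of_real (1 - (1 - a)) else 0)) = (\<lambda>n. p n * q n)"
  proof (rule ext)
    fix n
    have "of_real (1 - a) * (of_real x * (p n * q n)) = p n * q n"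
      using x(2) by (simp add: mult.assoc[symmetric])
    then show "of_real (1 - a) * ((of_real x * p n + (if n = 0 then of_real (1 - x) else 0)) * q n)
          + (if n = 0 then of_real (1 - (1 - a)) else 0) = p n * q n"
      using \<open>p 0 = 1\<close> \<open>q 0 = 1\<close> by (cases "n = 0") (simp_all add: algebra_simps)
  qed
  ultimately show ?thesis by (simp add: algebra_simps)
qed


section \<open>The series with coefficients 1 / (beta n + 1)\<close>

lemma Re_one_div_one_minus_ge:
  fixes u :: complex assumes u: "norm u < 1"
  shows "1 / (1 + norm u) \<le> Re (1 / (1 - u))"
proof -
  define x y r where "x = Re u" and "y = Im u" and "r = norm u"
  have xy: "x\<^sup>2 + y\<^sup>2 = r\<^sup>2" by (simp add: x_def y_def r_def cmod_power2)
  have r: "0 \<le> r" "r < 1" using u by (simp_all add: r_def)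
  have "x\<^sup>2 \<le> r\<^sup>2" using xy by (metis le_add_same_cancel1 zero_le_power2)
  then have "\<bar>x\<bar> \<le> r" using r by (metis abs_le_square_iff abs_of_nonneg)
  then have x: "- r \<le> x" "x \<le> r" by auto
  define D where "D = (1 - x)\<^sup>2 + y\<^sup>2"
  have D: "D = 1 - 2 * x + r\<^sup>2" using xy by (simp add: D_def power2_eq_square algebra_simps)
  have "0 < (1 - r) * (1 - r)" using r by simp
  then have D_pos: "0 < D" using x unfolding D power2_eq_square by (simp add: algebra_simps)
  have "(1 - x) * (1 + r) - D = (r + x) * (1 - r)" unfolding D by (simp add: algebra_simps power2_eq_square)
  moreover have "0 \<le> (r + x) * (1 - r)" using x r by simp
  ultimately have "D \<le> (1 - x) * (1 + r)" by simp
  then have "1 / (1 + r) \<le> (1 - x) / D" using D_pos r by (simp add: field_simps)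
  moreover have "Re (1 / (1 - u)) = (1 - x) / D" by (simp add: Re_divide D_def x_def y_def)
  ultimately show ?thesis by (simp add: r_def)
qed

lemma has_integral_powr_power:
  fixes \<beta> :: real assumes \<beta>: "\<beta> > 0"
  shows "((\<lambda>t. (t powr \<beta>) ^ n) has_integral 1 / (\<beta> * real n + 1)) {0..1}"
proof -
  define r where "r = \<beta> * real n + 1"
  have r: "r > 0" unfolding r_def using \<beta> by (simp add: add_nonneg_pos)
  define F where "F = (\<lambda>t::real. t powr r / r)"
  have "((\<lambda>t. (t powr \<beta>) ^ n) has_integral (F 1 - F 0)) {0..1}"
  proof (rule fundamental_theorem_of_calculus_interior_strong[where S="{}"])
    fix x :: real assume x: "x \<in> {0<..<1} - {}"
    have "((\<lambda>t. t powr r) has_real_derivative r * x powr (r - 1)) (at x)"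
      by (rule has_real_derivative_powr) (use x in auto)
    then have "(F has_real_derivative (r * x powr (r - 1)) / r) (at x)" unfolding F_def by (rule DERIV_cdivide)
    moreover have "(r * x powr (r - 1)) / r = (x powr \<beta>) ^ n"
    proof -
      have "(r * x powr (r - 1)) / r = x powr (\<beta> * real n)" using r by (simp add: r_def)
      also have "\<dots> = (x powr \<beta>) powr real n" by (simp add: powr_powr)
      also have "\<dots> = (x powr \<beta>) ^ n" by (rule powr_realpow) (use x in simp)
      finally show ?thesis .
    qed
    ultimately show "(F has_vector_derivative (x powr \<beta>) ^ n) (at x)"
      by (simp add: has_real_derivative_iff_has_vector_derivative)
  next
    show "continuous_on {0..1} F" unfolding F_def
      by (intro continuous_intros continuous_on_powr') (use r in auto)
  qed auto
  moreover have "F 1 - F 0 = 1 / (\<beta> * real n + 1)" by (simp add: F_def r_def)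
  ultimately show ?thesis by simp
qed

definition recip_linear :: "real \<Rightarrow> nat \<Rightarrow> complex" where
  "recip_linear \<beta> n = complex_of_real (1 / (\<beta> * real n + 1))"

text \<open>Expanding \<open>1 / (1 - t\<^sup>\<beta> w)\<close> geometrically and integrating termwise, using
  \<open>\<integral>\<^sub>0\<^sup>1 t\<^sup>\<beta>\<^sup>n dt = 1 / (\<beta> n + 1)\<close>.\<close>
lemma pseries_recip_linear_integral:
  fixes \<beta> :: real and w :: complex
  assumes \<beta>: "\<beta> > 0" and w: "norm w < 1"
  shows "pseries (recip_linear \<beta>) w = integral {0..1} (\<lambda>t. 1 / (1 - complex_of_real (t powr \<beta>) * w))"
    and "(\<lambda>t. 1 / (1 - complex_of_real (t powr \<beta>) * w)) integrable_on {0..1}"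
proof -
  have powr_bounds: "0 \<le> t powr \<beta>" "t powr \<beta> \<le> 1" if "t \<in> {0..1}" for t
    using that \<beta> by (auto intro: powr_le1)
  define \<phi> where "\<phi> = (\<lambda>n t. complex_of_real ((t powr \<beta>) ^ n))"
  have cont_\<phi>: "continuous_on {0..1} (\<phi> n)" for n unfolding \<phi>_def
    by (intro continuous_intros continuous_on_powr') (use \<beta> in auto)
  have \<phi>_le: "norm (\<phi> n t) \<le> 1" if "t \<in> {0..1}" for n t
    using powr_bounds[OF that] by (simp add: \<phi>_def norm_power power_le_one)
  have sw: "summable (\<lambda>n. norm (w ^ n))" using w by (simp add: norm_power summable_geometric)
  note termwise = sums_integral_mult_suminf[where a=0 and b=1 and g="\<lambda>_. 1" and \<phi>=\<phi> and c="\<lambda>n. w ^ n",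
      OF continuous_on_const cont_\<phi> \<phi>_le sw]
  have int_\<phi>: "integral {0..1} (\<lambda>t. 1 * \<phi> n t) = recip_linear \<beta> n" for n
    using has_integral_of_real[OF has_integral_powr_power[OF \<beta>, of n], where 'b=complex]
    by (simp add: \<phi>_def recip_linear_def integral_unique)
  have geometric: "1 * (\<Sum>n. w ^ n * \<phi> n t) = 1 / (1 - complex_of_real (t powr \<beta>) * w)" if "t \<in> {0..1}" for t
  proof -
    have "norm (complex_of_real (t powr \<beta>) * w) \<le> norm w"
      using powr_bounds[OF that] by (simp add: norm_mult mult_left_le_one_le)
    then have n: "norm (complex_of_real (t powr \<beta>) * w) < 1" using w by simp
    have "(\<Sum>n. w ^ n * \<phi> n t) = (\<Sum>n. (complex_of_real (t powr \<beta>) * w) ^ n)"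
      by (simp add: \<phi>_def power_mult_distrib mult_ac)
    also have "\<dots> = 1 / (1 - complex_of_real (t powr \<beta>) * w)" by (rule suminf_geometric[OF n])
    finally show ?thesis by simp
  qed
  have "integral {0..1} (\<lambda>t. 1 * (\<Sum>n. w ^ n * \<phi> n t))
      = integral {0..1} (\<lambda>t. 1 / (1 - complex_of_real (t powr \<beta>) * w))"
    by (rule integral_cong) (rule geometric)
  with termwise(1) have "(\<lambda>n. w ^ n * recip_linear \<beta> n)
      sums integral {0..1} (\<lambda>t. 1 / (1 - complex_of_real (t powr \<beta>) * w))"
    unfolding int_\<phi> by simp
  then show "pseries (recip_linear \<beta>) w = integral {0..1} (\<lambda>t. 1 / (1 - complex_of_real (t powr \<beta>) * w))"
    unfolding pseries_def by (simp add: sums_iff mult_ac)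
  show "(\<lambda>t. 1 / (1 - complex_of_real (t powr \<beta>) * w)) integrable_on {0..1}"
    using termwise(2) by (rule integrable_eq) (blast intro: geometric)+
qed

lemma Re_pseries_recip_linear_ge:
  fixes \<beta> :: real and w :: complex and h :: "real \<Rightarrow> real"
  assumes \<beta>: "\<beta> > 0" and w: "norm w < 1" and h: "(h has_integral I) {0..1}"
    and h_le: "\<And>t. t \<in> {0..1} \<Longrightarrow> h t \<le> 1 / (1 + t powr \<beta> * norm w)"
  shows "I \<le> Re (pseries (recip_linear \<beta>) w)"
proof -
  note repr = pseries_recip_linear_integral[OF \<beta> w]
  have "I \<le> integral {0..1} (\<lambda>t. Re (1 / (1 - complex_of_real (t powr \<beta>) * w)))"
  proof (rule has_integral_le[OF h])
    show "((\<lambda>t. Re (1 / (1 - complex_of_real (t powr \<beta>) * w))) has_integral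
        integral {0..1} (\<lambda>t. Re (1 / (1 - complex_of_real (t powr \<beta>) * w)))) {0..1}"
      using has_integral_Re[OF integrable_integral[OF repr(2)]] by (blast intro: integrable_integral)
  next
    fix t :: real assume t: "t \<in> {0..1}"
    have powr_bounds: "0 \<le> t powr \<beta>" "t powr \<beta> \<le> 1" using t \<beta> by (auto intro: powr_le1)
    then have "norm (complex_of_real (t powr \<beta>) * w) \<le> norm w"
      by (simp add: norm_mult mult_left_le_one_le)
    then have n: "norm (complex_of_real (t powr \<beta>) * w) < 1" using w by simp
    have "h t \<le> 1 / (1 + norm (complex_of_real (t powr \<beta>) * w))"
      using h_le[OF t] powr_bounds by (simp add: norm_mult)
    also have "\<dots> \<le> Re (1 / (1 - complex_of_real (t powr \<beta>) * w))" by (rule Re_one_div_one_minus_ge[OF n])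
    finally show "h t \<le> Re (1 / (1 - complex_of_real (t powr \<beta>) * w))" .
  qed
  also have "\<dots> = Re (pseries (recip_linear \<beta>) w)"
    using has_integral_Re[OF integrable_integral[OF repr(2)]] unfolding repr(1) by (simp add: integral_unique)
  finally show ?thesis .
qed

lemma caratheodory_recip_linear:
  assumes \<beta>: "0 \<le> \<beta>" shows "caratheodory (1 / 2) (recip_linear \<beta>)"
proof -
  have "disc_summable (recip_linear \<beta>)"
  proof (rule disc_summable_bounded)
    fix n
    have "1 \<le> \<beta> * real n + 1" using \<beta> by simp
    then show "norm (recip_linear \<beta> n) \<le> 1" unfolding recip_linear_def norm_of_real by simp
  qed
  moreover have "1 / 2 \<le> Re (pseries (recip_linear \<beta>) w)" if w: "norm w < 1" for w
  proof (cases "\<beta> = 0")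
    case True
    have "pseries (recip_linear \<beta>) w = 1 / (1 - w)"
      using suminf_geometric[OF w] by (simp add: pseries_def recip_linear_def True)
    moreover have "1 / 2 \<le> 1 / (1 + norm w)"
      by (rule divide_left_mono) (use w in \<open>auto intro!: mult_pos_pos add_pos_nonneg\<close>)
    ultimately show ?thesis using Re_one_div_one_minus_ge[OF w] by simp
  next
    case False
    have half: "((\<lambda>t::real. 1 / 2) has_integral (1 / 2 :: real)) {0..1}"
      using has_integral_const_real[of "1 / 2 :: real" 0 1] by simp
    have bound: "1 / 2 \<le> 1 / (1 + t powr \<beta> * norm w)" if "t \<in> {0..1}" for t
    proof -
      have "t powr \<beta> * norm w \<le> 1" using that w \<beta> by (simp add: mult_le_one powr_le1)
      moreover have "0 \<le> t powr \<beta> * norm w" by simp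
      ultimately show ?thesis
        by (intro divide_left_mono) (auto intro!: mult_pos_pos add_pos_nonneg)
    qed
    show ?thesis by (rule Re_pseries_recip_linear_ge[OF _ w half]) (use False \<beta> bound in auto)
  qed
  ultimately show ?thesis by (simp add: caratheodory_def recip_linear_def)
qed

text \<open>\<open>8/9 - 4t/9\<close> is a linear minorant of \<open>1/(1 + t)\<close> on \<open>[0, 1]\<close> with integral \<open>2/3\<close>;
  it replaces the exact value \<open>ln 2\<close>.\<close>
lemma caratheodory_recip_linear_1: "caratheodory (2 / 3) (recip_linear 1)"
proof -
  have "disc_summable (recip_linear 1)" using caratheodory_recip_linear[of 1] by (simp add: caratheodory_def)
  moreover have "2 / 3 \<le> Re (pseries (recip_linear 1) w)" if w: "norm w < 1" for w
  proof (rule Re_pseries_recip_linear_ge[OF _ w])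
    show "((\<lambda>t::real. 8/9 - 4 * t / 9) has_integral (2/3 :: real)) {0..1}"
    proof -
      define G where "G = (\<lambda>t::real. 8 * t / 9 - 2 * t\<^sup>2 / 9)"
      have "((\<lambda>t::real. 8/9 - 4 * t / 9) has_integral (G 1 - G 0)) {0..1}"
      proof (rule fundamental_theorem_of_calculus)
        fix x :: real assume "x \<in> {0..1}"
        have "(G has_real_derivative (8/9 - 4 * x / 9)) (at x within {0..1})"
          unfolding G_def by (auto intro!: derivative_eq_intros simp: field_simps)
        then show "(G has_vector_derivative (8/9 - 4 * x / 9)) (at x within {0..1})"
          by (simp add: has_real_derivative_iff_has_vector_derivative)
      qed simp
      then show ?thesis by (simp add: G_def)
    qed
    fix t :: real assume t: "t \<in> {0..1}"
    have "(8/9 - 4 * t / 9) * (1 + t) \<le> 1"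
    proof -
      have "1 - (8/9 - 4 * t / 9) * (1 + t) = (2 * t - 1)\<^sup>2 / 9" by (simp add: field_simps power2_eq_square)
      then show ?thesis by (smt (verit) zero_le_divide_iff zero_le_power2)
    qed
    then have "8/9 - 4 * t / 9 \<le> 1 / (1 + t)" using t by (simp add: field_simps)
    also have "\<dots> \<le> 1 / (1 + t powr 1 * norm w)"
      using t w by (intro divide_left_mono) (auto simp: add_pos_nonneg intro: mult_left_le)
    finally show "8/9 - 4 * t / 9 \<le> 1 / (1 + t powr 1 * norm w)" .
  qed simp
  ultimately show ?thesis by (simp add: caratheodory_def recip_linear_def)
qed


section \<open>The operator L on Taylor coefficients\<close>

lemma higher_deriv_sums:
  assumes g: "g holomorphic_on ball 0 1" and z: "norm z < 1"
  shows "(\<lambda>n. tcoef g (n + k) * (fact (n + k) / fact n) * z ^ n) sums (deriv ^^ k) g z"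
proof -
  have h: "(deriv ^^ k) g holomorphic_on ball 0 1" by (rule holomorphic_higher_deriv[OF g]) simp
  have "(\<lambda>n. (deriv ^^ n) ((deriv ^^ k) g) 0 / fact n * (z - 0) ^ n) sums (deriv ^^ k) g z"
    by (rule holomorphic_power_series[OF h]) (use z in simp)
  moreover have "(deriv ^^ n) ((deriv ^^ k) g) 0 / fact n = tcoef g (n + k) * (fact (n + k) / fact n)" for n
  proof -
    have "(deriv ^^ n) ((deriv ^^ k) g) = (deriv ^^ (n + k)) g" by (simp add: funpow_add)
    moreover have "(fact (n + k) :: complex) \<noteq> 0" by simp
    ultimately show ?thesis by (simp add: tcoef_def)
  qed
  ultimately show ?thesis by simp
qed

lemma power_mult_higher_deriv_sums:
  assumes g: "g holomorphic_on ball 0 1" and z: "norm z < 1"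
  shows "(\<lambda>n. of_nat (n choose k) * fact k * tcoef g n * z ^ n) sums (z ^ k * (deriv ^^ k) g z)"
proof -
  define F where "F = (\<lambda>n. of_nat (n choose k) * fact k * tcoef g n * z ^ n)"
  have "(\<lambda>n. z ^ k * (tcoef g (n + k) * (fact (n + k) / fact n) * z ^ n)) sums (z ^ k * (deriv ^^ k) g z)"
    by (rule sums_mult[OF higher_deriv_sums[OF g z]])
  moreover have "z ^ k * (tcoef g (n + k) * (fact (n + k) / fact n) * z ^ n) = F (n + k)" for n
  proof -
    have "(of_nat ((n + k) choose k) :: complex) = fact (n + k) / (fact k * fact n)"
      using binomial_fact[of k "n + k"] by simp
    then show ?thesis by (simp add: F_def power_add field_simps)
  qed
  ultimately have "(\<lambda>n. F (n + k)) sums (z ^ k * (deriv ^^ k) g z)" by simp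
  then have "F sums (z ^ k * (deriv ^^ k) g z + (\<Sum>i<k. F i))" by (simp only: sums_iff_shift)
  moreover have "(\<Sum>i<k. F i) = 0" by (rule sum.neutral) (simp add: F_def binomial_eq_0)
  ultimately show ?thesis by (simp add: F_def)
qed

lemma tcoef_deriv: "tcoef (deriv g) n = of_nat (Suc n) * tcoef g (Suc n)"
proof -
  have deriv_n: "(deriv ^^ n) (deriv g) = (deriv ^^ Suc n) g" by (simp only: funpow_Suc_right o_apply)
  have "of_nat (Suc n) * tcoef g (Suc n)
      = of_nat (Suc n) * (deriv ^^ Suc n) g 0 / (of_nat (Suc n) * fact n)"
    by (simp only: tcoef_def of_nat_fact) (simp only: fact_Suc times_divide_eq_right)
  also have "\<dots> = (deriv ^^ Suc n) g 0 / fact n"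
    by (rule nonzero_mult_divide_mult_cancel_left) (simp del: of_nat_Suc)
  finally show ?thesis using deriv_n by (simp add: tcoef_def del: funpow.simps)
qed

definition Lop_weight :: "real \<Rightarrow> real \<Rightarrow> nat \<Rightarrow> real" where
  "Lop_weight \<gamma> \<delta> n = (real n + 1) * (\<gamma> + \<delta> * real n + (\<delta> - \<gamma>) / 2 * real n * (real n - 1))"

definition Lcoef :: "real \<Rightarrow> real \<Rightarrow> (complex \<Rightarrow> complex) \<Rightarrow> nat \<Rightarrow> complex" where
  "Lcoef \<gamma> \<delta> g n = of_real (Lop_weight \<gamma> \<delta> n) * tcoef g (Suc n)"

text \<open>Write \<open>L g = \<gamma> h + \<delta> z h' + (\<delta> - \<gamma>)/2 z\<^sup>2 h''\<close> with \<open>h = g'\<close> and expand each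
  \<open>z\<^sup>k h\<^sup>(\<^sup>k\<^sup>)\<close> termwise.\<close>
lemma Lop_sums:
  assumes g: "g holomorphic_on ball 0 1" and z: "norm z < 1"
  shows "(\<lambda>n. Lcoef \<gamma> \<delta> g n * z ^ n) sums Lop \<gamma> \<delta> g z"
proof -
  define h where "h = deriv g"
  have h: "h holomorphic_on ball 0 1" unfolding h_def by (rule holomorphic_deriv[OF g open_ball])
  define c where "c = complex_of_real ((\<delta> - \<gamma>) / 2)"
  have "(\<lambda>n. of_real \<gamma> * (of_nat (n choose 0) * fact 0 * tcoef h n * z ^ n)
          + of_real \<delta> * (of_nat (n choose 1) * fact 1 * tcoef h n * z ^ n)
          + c * (of_nat (n choose 2) * fact 2 * tcoef h n * z ^ n))
      sums (of_real \<gamma> * (z ^ 0 * (deriv ^^ 0) h z) + of_real \<delta> * (z ^ 1 * (deriv ^^ 1) h z)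
          + c * (z ^ 2 * (deriv ^^ 2) h z))"
    by (intro sums_add sums_mult power_mult_higher_deriv_sums[OF h z])
  moreover have "of_real \<gamma> * (z ^ 0 * (deriv ^^ 0) h z) + of_real \<delta> * (z ^ 1 * (deriv ^^ 1) h z)
          + c * (z ^ 2 * (deriv ^^ 2) h z) = Lop \<gamma> \<delta> g z"
    by (simp add: Lop_def h_def c_def numeral_2_eq_2 numeral_3_eq_3 mult_ac)
  moreover have "(\<lambda>n. of_real \<gamma> * (of_nat (n choose 0) * fact 0 * tcoef h n * z ^ n)
          + of_real \<delta> * (of_nat (n choose 1) * fact 1 * tcoef h n * z ^ n)
          + c * (of_nat (n choose 2) * fact 2 * tcoef h n * z ^ n)) = (\<lambda>n. Lcoef \<gamma> \<delta> g n * z ^ n)"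
  proof (rule ext)
    fix n
    have "(of_nat (n choose 2) :: complex) * fact 2 = of_nat n * (of_nat n - 1)"
      by (simp only: binomial_gbinomial gbinomial_mult_fact') (simp add: numeral_2_eq_2 algebra_simps)
    moreover have "(fact 2 :: complex) = 2" by (simp add: fact_numeral)
    ultimately have choose_2: "(of_nat (n choose 2) :: complex) = of_nat n * (of_nat n - 1) / 2"
      by (simp add: field_simps)
    show "of_real \<gamma> * (of_nat (n choose 0) * fact 0 * tcoef h n * z ^ n)
          + of_real \<delta> * (of_nat (n choose 1) * fact 1 * tcoef h n * z ^ n)
          + c * (of_nat (n choose 2) * fact 2 * tcoef h n * z ^ n) = Lcoef \<gamma> \<delta> g n * z ^ n"
      by (simp add: Lcoef_def Lop_weight_def h_def c_def tcoef_deriv choose_2 field_simps)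
  qed
  ultimately show ?thesis by simp
qed

lemma disc_summable_Lcoef: "g holomorphic_on ball 0 1 \<Longrightarrow> disc_summable (Lcoef \<gamma> \<delta> g)"
  and pseries_Lcoef: "g holomorphic_on ball 0 1 \<Longrightarrow> norm z < 1 \<Longrightarrow> pseries (Lcoef \<gamma> \<delta> g) z = Lop \<gamma> \<delta> g z"
  using disc_summable_sums[OF Lop_sums] by auto

lemma Lop_weight_eq:
  assumes "\<gamma> \<noteq> 0"
  shows "Lop_weight \<gamma> \<delta> n = \<gamma> * (real n + 1)\<^sup>2 * ((\<delta> - \<gamma>) / (2 * \<gamma>) * real n + 1)"
  using assms by (simp add: Lop_weight_def field_simps power2_eq_square)

lemma Lop_weight_pos:
  assumes "0 < \<gamma>" "\<gamma> \<le> \<delta>" shows "0 < Lop_weight \<gamma> \<delta> n"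
proof -
  have "Lop_weight \<gamma> \<delta> n = \<gamma> * (real n + 1)\<^sup>2 * ((\<delta> - \<gamma>) / (2 * \<gamma>) * real n + 1)"
    using assms by (intro Lop_weight_eq) simp
  moreover have "0 < (\<delta> - \<gamma>) / (2 * \<gamma>) * real n + 1" using assms by (simp add: add_nonneg_pos)
  ultimately show ?thesis using assms by simp
qed

section \<open>Convolution\<close>

lemma tcoef_0: "tcoef g 0 = g 0"
  by (simp add: tcoef_def)

lemma tcoef_1: "tcoef g (Suc 0) = deriv g 0"
  by (simp add: tcoef_def)

lemma aconv_eq_pseries: "aconv g h = pseries (\<lambda>n. tcoef g n * tcoef h n)"
  by (simp add: aconv_def pseries_def fun_eq_iff)

lemma
  assumes "g holomorphic_on ball 0 1" "h holomorphic_on ball 0 1"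
  shows holomorphic_aconv: "aconv g h holomorphic_on ball 0 1"
    and tcoef_aconv: "tcoef (aconv g h) n = tcoef g n * tcoef h n"
proof -
  have "disc_summable (\<lambda>n. tcoef g n * tcoef h n)"
    by (intro disc_summable_hadamard disc_summable_tcoef assms)
  then show "aconv g h holomorphic_on ball 0 1" "tcoef (aconv g h) n = tcoef g n * tcoef h n"
    unfolding aconv_eq_pseries by (rule holomorphic_pseries, rule tcoef_pseries)
qed

lemma hconv_H0:
  assumes "f1 \<in> H0" "f2 \<in> H0" shows "hconv f1 f2 \<in> H0"
proof -
  obtain s1 t1 where f1: "f1 = (s1, t1)" by (cases f1)
  obtain s2 t2 where f2: "f2 = (s2, t2)" by (cases f2)
  have hol: "s1 holomorphic_on ball 0 1" "s2 holomorphic_on ball 0 1"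
      "t1 holomorphic_on ball 0 1" "t2 holomorphic_on ball 0 1"
    and val: "s1 0 = 0" "deriv s1 0 = 1" "t1 0 = 0" "deriv t1 0 = 0"
      "s2 0 = 0" "deriv s2 0 = 1" "t2 0 = 0" "deriv t2 0 = 0"
    using assms unfolding f1 f2 H0_def by auto
  have "aconv s1 s2 0 = 0" "deriv (aconv s1 s2) 0 = 1" "aconv t1 t2 0 = 0" "deriv (aconv t1 t2) 0 = 0"
    using tcoef_aconv[OF hol(1,2), of 0] tcoef_aconv[OF hol(1,2), of "Suc 0"]
      tcoef_aconv[OF hol(3,4), of 0] tcoef_aconv[OF hol(3,4), of "Suc 0"]
    by (simp_all add: tcoef_0 tcoef_1 val)
  then show ?thesis using holomorphic_aconv[OF hol(1,2)] holomorphic_aconv[OF hol(3,4)]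
    by (simp add: H0_def hconv_def f1 f2)
qed

lemma Re_gt_norm_iff_rotations:
  "cmod Y < Re (X - of_real lam) \<longleftrightarrow> (\<forall>\<sigma>. cmod \<sigma> = 1 \<longrightarrow> lam < Re (X + \<sigma> * Y))"
proof
  assume Y: "cmod Y < Re (X - of_real lam)"
  show "\<forall>\<sigma>. cmod \<sigma> = 1 \<longrightarrow> lam < Re (X + \<sigma> * Y)"
  proof (intro allI impI)
    fix \<sigma> :: complex assume "cmod \<sigma> = 1"
    have "- Re (\<sigma> * Y) \<le> cmod (\<sigma> * Y)" using abs_Re_le_cmod[of "\<sigma> * Y"] by linarith
    also have "\<dots> = cmod Y" using \<open>cmod \<sigma> = 1\<close> by (simp add: norm_mult)
    finally show "lam < Re (X + \<sigma> * Y)" using Y by simp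
  qed
next
  assume rot: "\<forall>\<sigma>. cmod \<sigma> = 1 \<longrightarrow> lam < Re (X + \<sigma> * Y)"
  define \<sigma> where "\<sigma> = (if Y = 0 then 1 else - of_real (cmod Y) / Y)"
  have "cmod \<sigma> = 1" by (simp add: \<sigma>_def norm_divide)
  then have "lam < Re (X + \<sigma> * Y)" using rot by blast
  moreover have "\<sigma> * Y = - of_real (cmod Y)" by (simp add: \<sigma>_def)
  ultimately show "cmod Y < Re (X - of_real lam)" by simp
qed

definition rotated_Lcoef :: "real \<Rightarrow> real \<Rightarrow> real \<Rightarrow> harm \<Rightarrow> complex \<Rightarrow> nat \<Rightarrow> complex" where
  "rotated_Lcoef \<gamma> \<delta> lam f \<sigma> n =
     (Lcoef \<gamma> \<delta> (fst f) n + \<sigma> * Lcoef \<gamma> \<delta> (snd f) n - (if n = 0 then of_real lam else 0)) / of_real (\<gamma> - lam)"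

lemma caratheodory_rotated_Lcoef:
  assumes f: "f \<in> RH0 \<gamma> \<delta> lam" and lam: "lam < \<gamma>" and \<sigma>: "cmod \<sigma> = 1"
  shows "caratheodory 0 (rotated_Lcoef \<gamma> \<delta> lam f \<sigma>)"
proof -
  obtain s t where st: "f = (s, t)" by (cases f)
  have hs: "s holomorphic_on ball 0 1" and ht: "t holomorphic_on ball 0 1"
    and ds: "deriv s 0 = 1" and dt: "deriv t 0 = 0"
    and rot: "\<And>z. norm z < 1 \<Longrightarrow> lam < Re (Lop \<gamma> \<delta> s z + \<sigma> * Lop \<gamma> \<delta> t z)"
    using f \<sigma> unfolding st RH0_def H0_def Re_gt_norm_iff_rotations by auto
  have sums: "(\<lambda>n. rotated_Lcoef \<gamma> \<delta> lam f \<sigma> n * z ^ n)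
      sums ((Lop \<gamma> \<delta> s z + \<sigma> * Lop \<gamma> \<delta> t z - of_real lam) / of_real (\<gamma> - lam))" if z: "norm z < 1" for z
  proof -
    have "(\<lambda>n. if n = 0 then complex_of_real lam else 0) sums complex_of_real lam"
      using sums_single[of 0 "\<lambda>_. complex_of_real lam"] by simp
    then have "(\<lambda>n. (Lcoef \<gamma> \<delta> s n * z ^ n + \<sigma> * (Lcoef \<gamma> \<delta> t n * z ^ n)
          - (if n = 0 then of_real lam else 0)) / of_real (\<gamma> - lam))
        sums ((Lop \<gamma> \<delta> s z + \<sigma> * Lop \<gamma> \<delta> t z - of_real lam) / of_real (\<gamma> - lam))"
      by (intro sums_divide sums_diff sums_add sums_mult Lop_sums hs ht z)
    moreover have "(\<lambda>n. (Lcoef \<gamma> \<delta> s n * z ^ n + \<sigma> * (Lcoef \<gamma> \<delta> t n * z ^ n)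
          - (if n = 0 then of_real lam else 0)) / of_real (\<gamma> - lam))
        = (\<lambda>n. rotated_Lcoef \<gamma> \<delta> lam f \<sigma> n * z ^ n)"
      by (rule ext) (simp add: rotated_Lcoef_def st algebra_simps)
    ultimately show ?thesis by simp
  qed
  have summable: "disc_summable (rotated_Lcoef \<gamma> \<delta> lam f \<sigma>)"
    and pseries: "\<And>z. norm z < 1 \<Longrightarrow> pseries (rotated_Lcoef \<gamma> \<delta> lam f \<sigma>) z
      = (Lop \<gamma> \<delta> s z + \<sigma> * Lop \<gamma> \<delta> t z - of_real lam) / of_real (\<gamma> - lam)"
    using disc_summable_sums[OF sums] by auto
  have "rotated_Lcoef \<gamma> \<delta> lam f \<sigma> 0 = 1"
    using lam by (simp add: rotated_Lcoef_def st Lcoef_def Lop_weight_def tcoef_1 ds dt)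
  moreover have "0 \<le> Re (pseries (rotated_Lcoef \<gamma> \<delta> lam f \<sigma>) z)" if "norm z < 1" for z
  proof -
    have "Re (pseries (rotated_Lcoef \<gamma> \<delta> lam f \<sigma>) z)
        = (Re (Lop \<gamma> \<delta> s z + \<sigma> * Lop \<gamma> \<delta> t z) - lam) / (\<gamma> - lam)"
      by (simp only: pseries[OF that] Re_divide_of_real minus_complex.sel Re_complex_of_real)
    then show ?thesis using rot[OF that] lam by simp
  qed
  ultimately show ?thesis using summable by (simp add: caratheodory_def)
qed

text \<open>For \<open>n > 0\<close> this is \<open>(\<gamma> - \<lambda>) / A\<^sub>n\<close>, where \<open>A\<^sub>n = \<gamma> (n+1)\<^sup>2 (\<beta> n + 1)\<close> is the weight of \<open>L\<close>
  (\<open>\<tau> = (\<gamma> - \<lambda>)/\<gamma>\<close>, \<open>\<beta> = (\<delta> - \<gamma>)/(2\<gamma>)\<close>); the factorisation makes it a Hadamard product of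
  series with known lower bounds on their real parts.\<close>
definition hconv_kernel :: "real \<Rightarrow> real \<Rightarrow> nat \<Rightarrow> complex" where
  "hconv_kernel \<tau> \<beta> n = of_real \<tau> * (recip_linear 1 n * recip_linear 1 n * recip_linear \<beta> n)
     + (if n = 0 then of_real (1 - \<tau>) else 0)"

lemma caratheodory_hconv_kernel:
  assumes F: "caratheodory 0 F" and G: "caratheodory 0 G" and \<beta>: "0 \<le> \<beta>" and \<tau>: "0 \<le> \<tau>" "\<tau> \<le> 1"
  shows "caratheodory (1 / 9) (\<lambda>n. F n * (G n * hconv_kernel \<tau> \<beta> n))"
proof -
  define E where "E = (\<lambda>n. recip_linear 1 n * recip_linear 1 n * recip_linear \<beta> n)"
  have "caratheodory (2/3 + (1 - 2/3) * (2 * (2/3) - 1)) (\<lambda>n. recip_linear 1 n * recip_linear 1 n)"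
    by (rule caratheodory_hadamard_shifted[OF caratheodory_recip_linear_1 _ caratheodory_recip_linear_1]) simp
  then have "caratheodory (7/9) (\<lambda>n. recip_linear 1 n * recip_linear 1 n)"
    by (rule caratheodory_mono) (simp add: field_simps)
  from caratheodory_hadamard_shifted[OF this _ caratheodory_recip_linear[OF \<beta>]]
  have "caratheodory (7/9) E" unfolding E_def by simp
  from caratheodory_hadamard[OF G this]
  have "caratheodory (5/9) (\<lambda>n. G n * E n)" by (rule caratheodory_mono) (simp add: field_simps)
  from caratheodory_affine[OF this \<tau>(1)]
  have "caratheodory (5/9) (\<lambda>n. of_real \<tau> * (G n * E n) + (if n = 0 then of_real (1 - \<tau>) else 0))"
    by (rule caratheodory_mono) (use \<tau> in simp)
  moreover have "G 0 = 1" using G by (simp add: caratheodory_def)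
  then have "(\<lambda>n. of_real \<tau> * (G n * E n) + (if n = 0 then of_real (1 - \<tau>) else 0))
      = (\<lambda>n. G n * hconv_kernel \<tau> \<beta> n)"
    by (intro ext) (simp add: hconv_kernel_def E_def algebra_simps)
  ultimately have "caratheodory (5/9) (\<lambda>n. G n * hconv_kernel \<tau> \<beta> n)" by simp
  from caratheodory_hadamard[OF F this] show ?thesis
    by (rule caratheodory_mono) (simp add: field_simps)
qed

lemma hconv_kernel_eq:
  assumes "0 < \<gamma>" "\<gamma> \<le> \<delta>" "n \<noteq> 0"
  shows "hconv_kernel ((\<gamma> - lam) / \<gamma>) ((\<delta> - \<gamma>) / (2 * \<gamma>)) n = of_real ((\<gamma> - lam) / Lop_weight \<gamma> \<delta> n)"
proof -
  define x y where "x = real n + 1" and "y = (\<delta> - \<gamma>) / (2 * \<gamma>) * real n + 1"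
  have xy: "0 < x" "0 < y" using assms by (simp_all add: x_def y_def add_nonneg_pos)
  have W: "Lop_weight \<gamma> \<delta> n = \<gamma> * x\<^sup>2 * y"
    unfolding x_def y_def using assms by (intro Lop_weight_eq) simp
  have "hconv_kernel ((\<gamma> - lam) / \<gamma>) ((\<delta> - \<gamma>) / (2 * \<gamma>)) n
      = of_real ((\<gamma> - lam) / \<gamma> * (1 / x * (1 / x) * (1 / y)))"
    using assms(3) by (simp add: hconv_kernel_def recip_linear_def x_def y_def)
  also have "\<dots> = of_real ((\<gamma> - lam) / Lop_weight \<gamma> \<delta> n)"
    using xy assms by (simp add: W field_simps power2_eq_square)
  finally show ?thesis .
qed

text \<open>Polarization: \<open>A (a a' + \<epsilon> b b') = ((A a + A b)(A a' + \<epsilon> A b') + (A a - A b)(A a' - \<epsilon> A b')) / (2A)\<close>.\<close>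
lemma Lcoef_hconv_eq:
  fixes \<gamma> \<delta> lam :: real and \<epsilon> :: complex
  defines "k \<equiv> hconv_kernel ((\<gamma> - lam) / \<gamma>) ((\<delta> - \<gamma>) / (2 * \<gamma>))"
  assumes H0: "f1 \<in> H0" "f2 \<in> H0" and \<gamma>: "0 < \<gamma>" "\<gamma> \<le> \<delta>" and lam: "lam < \<gamma>"
  shows "Lcoef \<gamma> \<delta> (fst (hconv f1 f2)) n + \<epsilon> * Lcoef \<gamma> \<delta> (snd (hconv f1 f2)) n
     = of_real ((\<gamma> - lam) / 2) *
         (rotated_Lcoef \<gamma> \<delta> lam f1 1 n * (rotated_Lcoef \<gamma> \<delta> lam f2 \<epsilon> n * k n)
          + rotated_Lcoef \<gamma> \<delta> lam f1 (-1) n * (rotated_Lcoef \<gamma> \<delta> lam f2 (-\<epsilon>) n * k n))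
       + (if n = 0 then of_real lam else 0)"
proof -
  obtain s1 t1 where f1: "f1 = (s1, t1)" by (cases f1)
  obtain s2 t2 where f2: "f2 = (s2, t2)" by (cases f2)
  have hol: "s1 holomorphic_on ball 0 1" "s2 holomorphic_on ball 0 1"
      "t1 holomorphic_on ball 0 1" "t2 holomorphic_on ball 0 1"
    and val: "deriv s1 0 = 1" "deriv t1 0 = 0" "deriv s2 0 = 1" "deriv t2 0 = 0"
    using H0 unfolding f1 f2 H0_def by auto
  note tcoef_conv = tcoef_aconv[OF hol(1,2)] tcoef_aconv[OF hol(3,4)]
  have tcoef_1_val: "tcoef s1 (Suc 0) = 1" "tcoef t1 (Suc 0) = 0" "tcoef s2 (Suc 0) = 1" "tcoef t2 (Suc 0) = 0"
    by (simp_all add: tcoef_1 val)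
  have ne: "complex_of_real \<gamma> - complex_of_real lam \<noteq> 0" using lam by simp
  show ?thesis
  proof (cases "n = 0")
    case True
    have "k 0 = 1" by (simp add: k_def hconv_kernel_def recip_linear_def)
    with True ne show ?thesis
      by (simp add: hconv_def f1 f2 Lcoef_def Lop_weight_def rotated_Lcoef_def tcoef_conv tcoef_1_val field_simps)
  next
    case False
    define A where "A = complex_of_real (Lop_weight \<gamma> \<delta> n)"
    define g where "g = complex_of_real (\<gamma> - lam)"
    have A: "A \<noteq> 0" using Lop_weight_pos[OF \<gamma>, of n] by (simp add: A_def)
    have g: "g \<noteq> 0" using lam by (simp add: g_def)
    have Lcoef_n: "Lcoef \<gamma> \<delta> h n = A * tcoef h (Suc n)" for h
      by (simp add: Lcoef_def A_def)
    have rotated_n: "rotated_Lcoef \<gamma> \<delta> lam (s, t) \<sigma> n = (A * tcoef s (Suc n) + \<sigma> * (A * tcoef t (Suc n))) / g"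
      for s t \<sigma> using False by (simp add: rotated_Lcoef_def Lcoef_def A_def g_def)
    have k_n: "k n = g / A"
      unfolding k_def A_def g_def by (simp add: hconv_kernel_eq[OF \<gamma> False])
    have \<gamma>_eq: "complex_of_real \<gamma> = g + complex_of_real lam" by (simp add: g_def)
    show ?thesis using False A g
      by (simp add: f1 f2 hconv_def Lcoef_n rotated_n tcoef_conv k_n \<gamma>_eq field_simps)
  qed
qed

lemma Re_Lop_hconv_rotation_gt:
  assumes f1: "f1 \<in> RH0 \<gamma> \<delta> lam" and f2: "f2 \<in> RH0 \<gamma> \<delta> lam"
    and lam: "0 \<le> lam" "lam < \<gamma>" and \<gamma>\<delta>: "\<gamma> \<le> \<delta>" and z: "norm z < 1" and \<epsilon>: "cmod \<epsilon> = 1"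
  shows "lam < Re (Lop \<gamma> \<delta> (fst (hconv f1 f2)) z + \<epsilon> * Lop \<gamma> \<delta> (snd (hconv f1 f2)) z)"
proof -
  define k where "k = hconv_kernel ((\<gamma> - lam) / \<gamma>) ((\<delta> - \<gamma>) / (2 * \<gamma>))"
  define Q where "Q \<sigma> \<rho> n = rotated_Lcoef \<gamma> \<delta> lam f1 \<sigma> n * (rotated_Lcoef \<gamma> \<delta> lam f2 \<rho> n * k n)" for \<sigma> \<rho> n
  have \<gamma>: "0 < \<gamma>" using lam by simp
  have H0: "f1 \<in> H0" "f2 \<in> H0" using f1 f2 by (auto simp: RH0_def)
  have Q: "caratheodory (1/9) (Q \<sigma> \<rho>)" if "cmod \<sigma> = 1" "cmod \<rho> = 1" for \<sigma> \<rho>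
    unfolding Q_def k_def
    by (rule caratheodory_hconv_kernel[OF caratheodory_rotated_Lcoef[OF f1 lam(2) that(1)]
          caratheodory_rotated_Lcoef[OF f2 lam(2) that(2)]])
       (use lam \<gamma> \<gamma>\<delta> in \<open>simp_all add: field_simps\<close>)
  have Qp: "caratheodory (1/9) (Q 1 \<epsilon>)" and Qm: "caratheodory (1/9) (Q (-1) (-\<epsilon>))"
    using Q \<epsilon> by simp_all
  then have sQ: "disc_summable (Q 1 \<epsilon>)" "disc_summable (Q (-1) (-\<epsilon>))"
    by (simp_all add: caratheodory_def)
  obtain S T where ST: "hconv f1 f2 = (S, T)" by (cases "hconv f1 f2")
  have hol: "S holomorphic_on ball 0 1" "T holomorphic_on ball 0 1"
    using hconv_H0[OF H0] by (simp_all add: ST H0_def)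
  define c where "c = complex_of_real ((\<gamma> - lam) / 2)"
  have "(\<lambda>n. Lcoef \<gamma> \<delta> S n + \<epsilon> * Lcoef \<gamma> \<delta> T n)
      = (\<lambda>n. c * (Q 1 \<epsilon> n + Q (-1) (-\<epsilon>) n) + (if n = 0 then of_real lam else 0))"
    using Lcoef_hconv_eq[OF H0 \<gamma> \<gamma>\<delta> lam(2), where \<epsilon>=\<epsilon>] by (simp add: fun_eq_iff Q_def k_def ST c_def)
  moreover have "Lop \<gamma> \<delta> S z + \<epsilon> * Lop \<gamma> \<delta> T z = pseries (\<lambda>n. Lcoef \<gamma> \<delta> S n + \<epsilon> * Lcoef \<gamma> \<delta> T n) z"
    using pseries_add[OF disc_summable_Lcoef[OF hol(1)] disc_summable_cmult[OF disc_summable_Lcoef[OF hol(2)]] z]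
      pseries_cmult[OF disc_summable_Lcoef[OF hol(2)] z] pseries_Lcoef[OF hol(1) z] pseries_Lcoef[OF hol(2) z]
    by simp
  ultimately have "Lop \<gamma> \<delta> S z + \<epsilon> * Lop \<gamma> \<delta> T z
      = c * (pseries (Q 1 \<epsilon>) z + pseries (Q (-1) (-\<epsilon>)) z) + of_real lam"
    using pseries_affine[OF disc_summable_add[OF sQ] z] pseries_add[OF sQ z] by simp
  then have "Re (Lop \<gamma> \<delta> S z + \<epsilon> * Lop \<gamma> \<delta> T z)
      = (\<gamma> - lam) / 2 * (Re (pseries (Q 1 \<epsilon>) z) + Re (pseries (Q (-1) (-\<epsilon>)) z)) + lam"
    by (simp add: c_def)
  moreover have "1 / 9 \<le> Re (pseries (Q 1 \<epsilon>) z)" "1 / 9 \<le> Re (pseries (Q (-1) (-\<epsilon>)) z)"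
    using Qp Qm z unfolding caratheodory_def by blast+
  then have "(\<gamma> - lam) / 2 * (2 / 9) \<le> (\<gamma> - lam) / 2 * (Re (pseries (Q 1 \<epsilon>) z) + Re (pseries (Q (-1) (-\<epsilon>)) z))"
    using lam by (intro mult_left_mono) auto
  ultimately show ?thesis using lam by (simp add: ST)
qed

theorem theorem16:
  fixes \<gamma> \<delta> lam :: real and f1 f2 :: harm
  assumes "0 \<le> lam" and "lam < \<gamma>" and "\<gamma> \<le> \<delta>"
    and "f1 \<in> RH0 \<gamma> \<delta> lam" and "f2 \<in> RH0 \<gamma> \<delta> lam"
  shows "hconv f1 f2 \<in> RH0 \<gamma> \<delta> lam"
proof -
  obtain S T where ST: "hconv f1 f2 = (S, T)" by (cases "hconv f1 f2")
  have "(S, T) \<in> H0" unfolding ST[symmetric] using assms(4,5) by (intro hconv_H0) (auto simp: RH0_def)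
  moreover have "lam < Re (Lop \<gamma> \<delta> S z + \<sigma> * Lop \<gamma> \<delta> T z)" if "z \<in> ball 0 1" "cmod \<sigma> = 1" for z \<sigma>
    using Re_Lop_hconv_rotation_gt[OF assms(4,5,1,2,3)] that by (simp add: ST)
  ultimately show ?thesis unfolding ST RH0_def Re_gt_norm_iff_rotations by simp
qed

end
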